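(* Let $L=\langle S,A,\to\rangle$ be a labelled transition system. For all $x,y\in\{o,b\}$ and all states $s,t\in S$, we have $s \mathrel{\underline{\leftrightarrow}}_{(x,y)} t$ (i.e. $s$ and $t$ are $(x,y)$-generic bisimilar) if and only if $s \equiv_{E(x,y)} t$ (i.e. Duplicator wins the $E(x,y)$-generic bisimulation game from $\langle (s,t),\dagger,\dagger,*\rangle_S$).
   Context: A labelled transition system (LTS) is $L=\langle S,A,\to\rangle$ with $S$ a set of states, $A$ a set of actions containing a special internal action $\tau$, and $\to\subseteq S\times A\times S$; write $s\xrightarrow{a}t$ for $(s,a,t)\in\to$. Let $\twoheadrightarrow$ be the reflexive-transitive closure of $\xrightarrow{\tau}$. Generic bisimulation. For $R\subseteq S\times S$ and $s,s',t\in S$: $s\twoheadrightarrow_{o,R,t}s'$ iff $s\twoheadrightarrow s'$; $s\twoheadrightarrow_{b,R,t}s'$ iff $s\twoheadrightarrow s'$, $t\,R\,s$ and $t\,R\,s'$. For $x,y\in\{o,b\}$, a symmetric relation $R\subseteq S\times S$ is an $(x,y)$-generic bisimulation if whenever $s\,R\,t$ and $s\xrightarrow{a}s'$, either (i) $a=\tau$ and $s'\,R\,t$, or (ii) there exist $t',t_1,t_2$ with $t\twoheadrightarrow_{x,R,s}t_1\xrightarrow{a}t_2\twoheadrightarrow_{y,R,s'}t'$ and $s'\,R\,t'$. Write $s\mathrel{\underline{\leftrightarrow}}_{(x,y)}t$ iff some $(x,y)$-generic bisimulation relates $s$ and $t$. Generic bisimulation game. Let $\frown,\smile$ be two formal tags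 and $E\subseteq\{\frown,\smile\}$. The $E$-generic bisimulation game on $L$ is played by Spoiler and Duplicator on Spoiler-owned configurations $\langle (s,t),c,m,r\rangle_S$ and Duplicator-owned configurations $\langle (s,t),c,m,r\rangle_D$, where $(s,t)\in S\times S$, $c\in (A\times S)\cup\{\dagger\}$ (challenge), $m\in (S\times\{\frown,\smile\})\cup\{\dagger\}$ (partial match), $r\in\{*,\checkmark\}$ (reward). From $\langle (s,t),c,m,r\rangle_S$ Spoiler may: (S1) move to $\langle (s,t),c,m,*\rangle_D$ if $c\neq\dagger$; (S2a) for some $s\xrightarrow{a}s'$, move to $\langle (s,t),(a,s'),(t,\frown),*\rangle_D$ if $c=\dagger$; (S2b) for some $s\xrightarrow{a}s'$, move to $\langle (s,t),(a,s'),(t,\frown),\checkmark\rangle_D$ if $c\neq (a,s')$; (S3) for some $t\xrightarrow{a}t'$, move to $\langle (t,s),(a,t'),(s,\frown),\checkmark\rangle_D$. From $\langle (u,v),(a,u'),(\bar v,f),r\rangle_D$ Duplicator may: (D1) move to $\langle (u',\bar v),\dagger,\dagger,\checkmark\rangle_S$ if $a=\tau$; (D2) if $f=\frown$ and $\bar v\xrightarrow{a}v'$: (a) move to $\langle (u',v'),(a,u'),(v',\smile),*\rangle_S$, or (b) move to $\langle (u',v'),\dagger,\dagger,\checkmark\rangle_S$, or (c) only if $\smile\in E$, move to $\langle (u,v),(a,u'),(v',\smile),*\rangle_S$; (D3) for some $\bar v\xrightarrow{\tau}v'$: (a) move to $\langle (u,v'),(a,u'),(v',f),*\rangle_S$,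 or (b) only if $f=\smile$, move to $\langle (u',v'),\dagger,\dagger,\checkmark\rangle_S$, or (c) only if $f\in E$, move to $\langle (u,v),(a,u'),(v',f),*\rangle_S$. Duplicator wins a finite play if Spoiler gets stuck, and an infinite play if it contains infinitely many configurations with reward $\checkmark$; all other plays are won by Spoiler. A player wins a configuration if she has a strategy that wins all plays starting in it. Write $s\equiv_E t$ iff Duplicator wins $\langle (s,t),\dagger,\dagger,*\rangle_S$. $E(x,y)$ is the smallest set such that $\frown\in E(o,y)$ and $\smile\in E(x,o)$ for all $x,y\in\{o,b\}$; thus $E(b,b)=\emptyset$, $E(o,b)=\{\frown\}$, $E(b,o)=\{\smile\}$, $E(o,o)=\{\frown,\smile\}$. *)

theory Defs
  imports Main
begin

text \<open>An LTS over states of type 's and actions of type 'a is given by a transition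
  predicate tr (tr s a t means s -a-> t) together with the designated internal
  action tau.  The state set S is the whole type 's.\<close>

definition tau_steps :: "('s \<Rightarrow> 'a \<Rightarrow> 's \<Rightarrow> bool) \<Rightarrow> 'a \<Rightarrow> 's \<Rightarrow> 's \<Rightarrow> bool" where
  "tau_steps tr tau = (\<lambda>u v. tr u tau v)\<^sup>*\<^sup>*"

datatype mode = Mo | Mb

text \<open>gstep tr tau x R t s s' stands for  s \<twoheadrightarrow>_{x,R,t} s'.\<close>
definition gstep :: "('s \<Rightarrow> 'a \<Rightarrow> 's \<Rightarrow> bool) \<Rightarrow> 'a \<Rightarrow> mode \<Rightarrow> ('s \<Rightarrow> 's \<Rightarrow> bool)
    \<Rightarrow> 's \<Rightarrow> 's \<Rightarrow> 's \<Rightarrow> bool" where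
  "gstep tr tau x R t s s' =
     (case x of
        Mo \<Rightarrow> tau_steps tr tau s s'
      | Mb \<Rightarrow> tau_steps tr tau s s' \<and> R t s \<and> R t s')"

definition generic_bisim :: "('s \<Rightarrow> 'a \<Rightarrow> 's \<Rightarrow> bool) \<Rightarrow> 'a \<Rightarrow> mode \<Rightarrow> mode
    \<Rightarrow> ('s \<Rightarrow> 's \<Rightarrow> bool) \<Rightarrow> bool" where
  "generic_bisim tr tau x y R \<longleftrightarrow>
     symp R \<and>
     (\<forall>s t a s'. R s t \<and> tr s a s' \<longrightarrow>
        (a = tau \<and> R s' t) \<or>
        (\<exists>t' t1 t2. gstep tr tau x R s t t1 \<and> tr t1 a t2 \<and>
                    gstep tr tau y R s' t2 t' \<and> R s' t'))"

definition gbisimilar :: "('s \<Rightarrow> 'a \<Rightarrow> 's \<Rightarrow> bool) \<Rightarrow> 'a \<Rightarrow> mode \<Rightarrow> mode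
    \<Rightarrow> 's \<Rightarrow> 's \<Rightarrow> bool" where
  "gbisimilar tr tau x y s t \<longleftrightarrow> (\<exists>R. generic_bisim tr tau x y R \<and> R s t)"

datatype tag = Frown | Smile
datatype reward = Star | Tick
datatype player = Spo | Dup

text \<open>Conf p (s,t) c m r is the configuration <(s,t),c,m,r> owned by p; None encodes dagger.\<close>
datatype ('s, 'a) conf =
  Conf player "'s \<times> 's" "('a \<times> 's) option" "('s \<times> tag) option" reward

fun owner :: "('s, 'a) conf \<Rightarrow> player" where
  "owner (Conf p _ _ _ _) = p"

fun rew :: "('s, 'a) conf \<Rightarrow> reward" where
  "rew (Conf _ _ _ _ r) = r"

inductive gmove :: "('s \<Rightarrow> 'a \<Rightarrow> 's \<Rightarrow> bool) \<Rightarrow> 'a \<Rightarrow> tag set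
    \<Rightarrow> ('s, 'a) conf \<Rightarrow> ('s, 'a) conf \<Rightarrow> bool"
  for tr :: "'s \<Rightarrow> 'a \<Rightarrow> 's \<Rightarrow> bool" and tau :: 'a and E :: "tag set" where
  S1: "c \<noteq> None \<Longrightarrow> gmove tr tau E (Conf Spo (s,t) c m r) (Conf Dup (s,t) c m Star)"
| S2a: "tr s a s' \<Longrightarrow> c = None \<Longrightarrow>
      gmove tr tau E (Conf Spo (s,t) c m r) (Conf Dup (s,t) (Some (a,s')) (Some (t,Frown)) Star)"
| S2b: "tr s a s' \<Longrightarrow> c \<noteq> Some (a,s') \<Longrightarrow>
      gmove tr tau E (Conf Spo (s,t) c m r) (Conf Dup (s,t) (Some (a,s')) (Some (t,Frown)) Tick)"
| S3: "tr t a t' \<Longrightarrow>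
      gmove tr tau E (Conf Spo (s,t) c m r) (Conf Dup (t,s) (Some (a,t')) (Some (s,Frown)) Tick)"
| D1: "a = tau \<Longrightarrow>
      gmove tr tau E (Conf Dup (u,v) (Some (a,u')) (Some (vb,f)) r) (Conf Spo (u',vb) None None Tick)"
| D2a: "f = Frown \<Longrightarrow> tr vb a v' \<Longrightarrow>
      gmove tr tau E (Conf Dup (u,v) (Some (a,u')) (Some (vb,f)) r)
                        (Conf Spo (u',v') (Some (a,u')) (Some (v',Smile)) Star)"
| D2b: "f = Frown \<Longrightarrow> tr vb a v' \<Longrightarrow>
      gmove tr tau E (Conf Dup (u,v) (Some (a,u')) (Some (vb,f)) r) (Conf Spo (u',v') None None Tick)"
| D2c: "f = Frown \<Longrightarrow> tr vb a v' \<Longrightarrow> Smile \<in> E \<Longrightarrow>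
      gmove tr tau E (Conf Dup (u,v) (Some (a,u')) (Some (vb,f)) r)
                        (Conf Spo (u,v) (Some (a,u')) (Some (v',Smile)) Star)"
| D3a: "tr vb tau v' \<Longrightarrow>
      gmove tr tau E (Conf Dup (u,v) (Some (a,u')) (Some (vb,f)) r)
                        (Conf Spo (u,v') (Some (a,u')) (Some (v',f)) Star)"
| D3b: "tr vb tau v' \<Longrightarrow> f = Smile \<Longrightarrow>
      gmove tr tau E (Conf Dup (u,v) (Some (a,u')) (Some (vb,f)) r) (Conf Spo (u',v') None None Tick)"
| D3c: "tr vb tau v' \<Longrightarrow> f \<in> E \<Longrightarrow>
      gmove tr tau E (Conf Dup (u,v) (Some (a,u')) (Some (vb,f)) r)
                        (Conf Spo (u,v) (Some (a,u')) (Some (v',f)) Star)"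

definition dup_strategy :: "('s \<Rightarrow> 'a \<Rightarrow> 's \<Rightarrow> bool) \<Rightarrow> 'a \<Rightarrow> tag set
    \<Rightarrow> (('s, 'a) conf list \<Rightarrow> ('s, 'a) conf) \<Rightarrow> bool" where
  "dup_strategy tr tau E \<sigma> \<longleftrightarrow>
     (\<forall>h. h \<noteq> [] \<and> owner (last h) = Dup \<and> (\<exists>c'. gmove tr tau E (last h) c')
          \<longrightarrow> gmove tr tau E (last h) (\<sigma> h))"

definition finite_play :: "('s \<Rightarrow> 'a \<Rightarrow> 's \<Rightarrow> bool) \<Rightarrow> 'a \<Rightarrow> tag set
    \<Rightarrow> (('s, 'a) conf list \<Rightarrow> ('s, 'a) conf) \<Rightarrow> ('s, 'a) conf \<Rightarrow> ('s, 'a) conf list \<Rightarrow> bool" where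
  "finite_play tr tau E \<sigma> c0 xs \<longleftrightarrow>
     xs \<noteq> [] \<and> hd xs = c0 \<and>
     (\<forall>i. Suc i < length xs \<longrightarrow>
        gmove tr tau E (xs ! i) (xs ! Suc i) \<and>
        (owner (xs ! i) = Dup \<longrightarrow> xs ! Suc i = \<sigma> (take (Suc i) xs))) \<and>
     \<not> (\<exists>c'. gmove tr tau E (last xs) c')"

definition infinite_play :: "('s \<Rightarrow> 'a \<Rightarrow> 's \<Rightarrow> bool) \<Rightarrow> 'a \<Rightarrow> tag set
    \<Rightarrow> (('s, 'a) conf list \<Rightarrow> ('s, 'a) conf) \<Rightarrow> ('s, 'a) conf \<Rightarrow> (nat \<Rightarrow> ('s, 'a) conf) \<Rightarrow> bool" where
  "infinite_play tr tau E \<sigma> c0 p \<longleftrightarrow>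
     p 0 = c0 \<and>
     (\<forall>i. gmove tr tau E (p i) (p (Suc i)) \<and>
          (owner (p i) = Dup \<longrightarrow> p (Suc i) = \<sigma> (map p [0..<Suc i])))"

definition dup_wins :: "('s \<Rightarrow> 'a \<Rightarrow> 's \<Rightarrow> bool) \<Rightarrow> 'a \<Rightarrow> tag set \<Rightarrow> ('s, 'a) conf \<Rightarrow> bool" where
  "dup_wins tr tau E c0 \<longleftrightarrow>
     (\<exists>\<sigma>. dup_strategy tr tau E \<sigma> \<and>
        (\<forall>xs. finite_play tr tau E \<sigma> c0 xs \<longrightarrow> owner (last xs) = Spo) \<and>
        (\<forall>p. infinite_play tr tau E \<sigma> c0 p \<longrightarrow> infinite {i. rew (p i) = Tick}))"

definition game_equiv :: "('s \<Rightarrow> 'a \<Rightarrow> 's \<Rightarrow> bool) \<Rightarrow> 'a \<Rightarrow> tag set \<Rightarrow> 's \<Rightarrow> 's \<Rightarrow> bool" where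
  "game_equiv tr tau E s t \<longleftrightarrow> dup_wins tr tau E (Conf Spo (s,t) None None Star)"

text \<open>E(x,y): the smallest set with Frown in E(o,y) and Smile in E(x,o).\<close>
definition Eset :: "mode \<Rightarrow> mode \<Rightarrow> tag set" where
  "Eset x y = (if x = Mo then {Frown} else {}) \<union> (if y = Mo then {Smile} else {})"

end

theory Submission
  imports Defs "HOL-Library.Nat_Bijection"
begin

text \<open>Soundness: a generic bisimulation is in particular a semi-generic one, in which a
  \<open>\<tau>\<close>-step may also be answered by a \<open>\<tau>\<close>-path, and the largest semi-generic bisimulation
  \<open>\<approx>\<close> is closed under stuttering; so in mode b every state on an answering \<open>\<tau>\<close>-path is
  related to the challenger. Duplicator wins by walking along such answers one move at a
  time inside \<open>\<approx>\<close>; the length of her remaining answer is a ranking that decreases on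
  every pair of consecutive *-rewarded configurations, so no play ends up rewarding only *.

  Completeness: the won positions form a generic bisimulation. From a won Duplicator
  configuration with a pending challenge she must complete her answer after finitely many
  moves, since otherwise Spoiler repeats the challenge forever and collects only *; the
  finite answer yields the transitions required of a generic bisimulation, the tags
  recording which part of it has been done and E(x,y) deciding whether the positions
  passed on the way must themselves be won.\<close>

section \<open>Semi-generic bisimulations\<close>

locale lts =
  fixes tr :: "'s \<Rightarrow> 'a \<Rightarrow> 's \<Rightarrow> bool" and tau :: 'a
begin

abbreviation steps :: "'s \<Rightarrow> 's \<Rightarrow> bool" where
  "steps \<equiv> tau_steps tr tau"

lemma steps_refl: "steps u u"
  unfolding tau_steps_def by simp

lemma steps_single: "tr u tau v \<Longrightarrow> steps u v"
  unfolding tau_steps_def by (rule r_into_rtranclp)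

lemma steps_Cons: "tr u tau w \<Longrightarrow> steps w v \<Longrightarrow> steps u v"
  unfolding tau_steps_def by (rule converse_rtranclp_into_rtranclp)

lemma steps_snoc: "steps u w \<Longrightarrow> tr w tau v \<Longrightarrow> steps u v"
  unfolding tau_steps_def by (rule rtranclp.rtrancl_into_rtrancl)

lemma steps_trans: "steps u w \<Longrightarrow> steps w v \<Longrightarrow> steps u v"
  unfolding tau_steps_def by (rule rtranclp_trans)

lemma gstep_Mo [simp]: "gstep tr tau Mo R s t t' \<longleftrightarrow> steps t t'"
  by (simp add: gstep_def)

lemma gstep_Mb [simp]: "gstep tr tau Mb R s t t' \<longleftrightarrow> steps t t' \<and> R s t \<and> R s t'"
  by (simp add: gstep_def)

lemma gstep_steps: "gstep tr tau x R s t t' \<Longrightarrow> steps t t'"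
  by (cases x) simp_all

lemma gstep_mono: "gstep tr tau x R s t t' \<Longrightarrow> R \<le> R' \<Longrightarrow> gstep tr tau x R' s t t'"
  by (cases x) auto

lemma gstep_Cons:
  "gstep tr tau x R s t t' \<Longrightarrow> steps u t \<Longrightarrow> R s u \<Longrightarrow> gstep tr tau x R s u t'"
  by (cases x) (auto intro: steps_trans)

inductive tau_path :: "('s \<Rightarrow> bool) \<Rightarrow> 's \<Rightarrow> 's \<Rightarrow> bool" for P where
  tau_path_refl: "P u \<Longrightarrow> tau_path P u u"
| tau_path_Cons: "P u \<Longrightarrow> tr u tau w \<Longrightarrow> tau_path P w v \<Longrightarrow> tau_path P u v"

lemma tau_path_hd: "tau_path P u v \<Longrightarrow> P u"
  by (erule tau_path.cases) auto

lemma tau_path_if_steps: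
  assumes "steps u v"
    and "\<And>w. steps u w \<Longrightarrow> steps w v \<Longrightarrow> P w"
  shows "tau_path P u v"
  using assms(1)[unfolded tau_steps_def] assms(2)
proof (induction u rule: converse_rtranclp_induct)
  case base
  then show ?case using tau_path_refl steps_refl by metis
next
  case (step u w)
  from step.hyps(2) have "steps w v" unfolding tau_steps_def .
  with step.hyps(1) have "P u" using step.prems steps_refl steps_Cons by metis
  moreover have "tau_path P w v" using step steps_Cons by metis
  ultimately show ?case using tau_path_Cons step.hyps(1) by metis
qed

text \<open>Clause (i) is relaxed so that a \<open>\<tau>\<close>-step may be answered by a \<open>\<tau>\<close>-path; unlike
  generic bisimulations, semi-generic ones are closed under the stuttering closure built
  in the proof of \<open>sbisimilar_stutter\<close>.\<close>

definition semi_gbisim :: "mode \<Rightarrow> mode \<Rightarrow> ('s \<Rightarrow> 's \<Rightarrow> bool) \<Rightarrow> bool" where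
  "semi_gbisim x y R \<longleftrightarrow>
     symp R \<and>
     (\<forall>s t a s'. R s t \<and> tr s a s' \<longrightarrow>
        (a = tau \<and> (\<exists>t'. steps t t' \<and> R s t' \<and> R s' t')) \<or>
        (\<exists>t' t1 t2. gstep tr tau x R s t t1 \<and> tr t1 a t2 \<and>
                    gstep tr tau y R s' t2 t' \<and> R s' t'))"

definition semi_gbisimilar :: "mode \<Rightarrow> mode \<Rightarrow> 's \<Rightarrow> 's \<Rightarrow> bool" where
  "semi_gbisimilar x y s t \<longleftrightarrow> (\<exists>R. semi_gbisim x y R \<and> R s t)"

lemma generic_bisim_imp_semi_gbisim: "generic_bisim tr tau x y R \<Longrightarrow> semi_gbisim x y R"
  unfolding generic_bisim_def semi_gbisim_def by (meson steps_refl)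

lemma semi_gbisimD:
  assumes "semi_gbisim x y R" and "R s t" and "tr s a s'"
  shows "(a = tau \<and> (\<exists>t'. steps t t' \<and> R s t' \<and> R s' t')) \<or>
    (\<exists>t' t1 t2. gstep tr tau x R s t t1 \<and> tr t1 a t2 \<and> gstep tr tau y R s' t2 t' \<and> R s' t')"
  using assms unfolding semi_gbisim_def by blast

end

locale gbisim_lts = lts tr tau for tr :: "'s \<Rightarrow> 'a \<Rightarrow> 's \<Rightarrow> bool" and tau :: 'a +
  fixes x y :: mode
begin

abbreviation sbisimilar :: "'s \<Rightarrow> 's \<Rightarrow> bool" (infix "\<approx>" 50) where
  "s \<approx> t \<equiv> semi_gbisimilar x y s t"

lemma sbisimilarI: "semi_gbisim x y R \<Longrightarrow> R s t \<Longrightarrow> s \<approx> t"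
  unfolding semi_gbisimilar_def by blast

lemma sbisimilar_sym: "s \<approx> t \<Longrightarrow> t \<approx> s"
  unfolding semi_gbisimilar_def semi_gbisim_def by (blast dest: sympD)

lemma semi_gbisim_sbisimilar: "semi_gbisim x y (\<approx>)"
proof -
  have "(a = tau \<and> (\<exists>t'. steps t t' \<and> s \<approx> t' \<and> s' \<approx> t')) \<or>
    (\<exists>t' t1 t2. gstep tr tau x (\<approx>) s t t1 \<and> tr t1 a t2 \<and> gstep tr tau y (\<approx>) s' t2 t' \<and> s' \<approx> t')"
    if "s \<approx> t" "tr s a s'" for s t a s'
  proof -
    obtain R where R: "semi_gbisim x y R" "R s t"
      using \<open>s \<approx> t\<close> unfolding semi_gbisimilar_def by blast
    have le: "R \<le> (\<approx>)" using sbisimilarI[OF R(1)] by blast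
    from semi_gbisimD[OF R \<open>tr s a s'\<close>] show ?thesis
    proof (elim disjE exE conjE)
      fix t' t1 t2
      assume a: "gstep tr tau x R s t t1" "tr t1 a t2" "gstep tr tau y R s' t2 t'" "R s' t'"
      have "gstep tr tau x (\<approx>) s t t1" "gstep tr tau y (\<approx>) s' t2 t'"
        using gstep_mono[OF a(1) le] gstep_mono[OF a(3) le] .
      then show ?thesis using a(2) sbisimilarI[OF R(1) a(4)] by blast
    qed (use sbisimilarI[OF R(1)] in blast)
  qed
  moreover have "symp (\<approx>)" by (rule sympI) (rule sbisimilar_sym)
  ultimately show ?thesis unfolding semi_gbisim_def by blast
qed

lemmas sbisimilarD = semi_gbisimD[OF semi_gbisim_sbisimilar]

lemma sbisimilar_steps:
  assumes "steps s u" and "s \<approx> t"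
  shows "\<exists>t'. steps t t' \<and> u \<approx> t'"
  using assms(1)[unfolded tau_steps_def]
proof (induction u rule: rtranclp_induct)
  case base
  then show ?case using assms(2) steps_refl by blast
next
  case (step u u')
  then obtain t' where t': "steps t t'" "u \<approx> t'" by blast
  from sbisimilarD[OF t'(2) step.hyps(2)] show ?case
  proof (elim disjE exE conjE)
    fix t'' assume "steps t' t''" "u' \<approx> t''"
    then show ?case using steps_trans[OF t'(1)] by blast
  next
    fix t'' t1 t2 assume a: "gstep tr tau x (\<approx>) u t' t1" "tr t1 tau t2"
      "gstep tr tau y (\<approx>) u' t2 t''" "u' \<approx> t''"
    have "steps t t1" using t'(1) gstep_steps[OF a(1)] by (rule steps_trans)
    then have "steps t t2" using a(2) by (rule steps_snoc)
    then have "steps t t''" using gstep_steps[OF a(3)] by (rule steps_trans)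
    then show ?case using a(4) by blast
  qed
qed

lemma semi_gbisim_if_steps_sbisimilar:
  assumes "symp B" and le: "(\<approx>) \<le> B" and reach: "\<And>p q. B p q \<Longrightarrow> \<exists>q'. steps q q' \<and> p \<approx> q'"
  shows "semi_gbisim x y B"
proof -
  have "(a = tau \<and> (\<exists>t'. steps q t' \<and> B p t' \<and> B p' t')) \<or>
      (\<exists>t' t1 t2. gstep tr tau x B p q t1 \<and> tr t1 a t2 \<and> gstep tr tau y B p' t2 t' \<and> B p' t')"
    if "B p q" "tr p a p'" for p q a p'
  proof -
    obtain q' where q': "steps q q'" "p \<approx> q'" using reach[OF \<open>B p q\<close>] by blast
    from sbisimilarD[OF q'(2) \<open>tr p a p'\<close>] show ?thesis
    proof (elim disjE exE conjE)
      fix t' assume "a = tau" "steps q' t'" "p \<approx> t'" "p' \<approx> t'"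
      then show ?thesis using steps_trans[OF q'(1)] le by blast
    next
      fix t' t1 t2 assume a: "gstep tr tau x (\<approx>) p q' t1" "tr t1 a t2"
        "gstep tr tau y (\<approx>) p' t2 t'" "p' \<approx> t'"
      have "gstep tr tau x B p q t1"
        using gstep_Cons[OF gstep_mono[OF a(1) le] q'(1) \<open>B p q\<close>] .
      moreover have "gstep tr tau y B p' t2 t'" using gstep_mono[OF a(3) le] .
      ultimately show ?thesis using a(2,4) le by blast
    qed
  qed
  with \<open>symp B\<close> show ?thesis unfolding semi_gbisim_def by blast
qed

lemma sbisimilar_stutter:
  assumes "r \<approx> v" and "r' \<approx> v" and "steps r u" and "steps u r'"
  shows "u \<approx> v"
proof -
  define N where "N a b \<longleftrightarrow> (\<exists>r r'. r \<approx> b \<and> r' \<approx> b \<and> steps r a \<and> steps a r')" for a b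
  define B where "B a b \<longleftrightarrow> a \<approx> b \<or> N a b \<or> N b a" for a b
  have "semi_gbisim x y B"
  proof (rule semi_gbisim_if_steps_sbisimilar)
    show "symp B" unfolding B_def symp_def using sbisimilar_sym by blast
    show "(\<approx>) \<le> B" by (simp add: B_def le_funI)
    fix p q assume "B p q"
    then consider "p \<approx> q" | "N p q" | "N q p" unfolding B_def by blast
    then show "\<exists>q'. steps q q' \<and> p \<approx> q'"
    proof cases
      case 1
      then show ?thesis using steps_refl by blast
    next
      case 2
      then obtain r where "r \<approx> q" "steps r p" unfolding N_def by blast
      then show ?thesis using sbisimilar_steps by blast
    next
      case 3
      then obtain r' where "r' \<approx> p" "steps q r'" unfolding N_def by blast
      then show ?thesis using sbisimilar_sym by blast
    qed
  qed
  moreover have "B u v" unfolding B_def N_def using assms by blast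
  ultimately show ?thesis by (rule sbisimilarI)
qed

lemma tau_path_sbisimilar:
  assumes "s \<approx> t" and "s \<approx> t'" and "steps t t'"
  shows "tau_path (\<lambda>u. s \<approx> u) t t'"
  using assms(3) by (rule tau_path_if_steps)
    (use sbisimilar_stutter[OF sbisimilar_sym[OF assms(1)] sbisimilar_sym[OF assms(2)]]
      sbisimilar_sym in blast)

lemma tau_path_gstep:
  "gstep tr tau z (\<approx>) s t t' \<Longrightarrow> tau_path (\<lambda>u. z = Mb \<longrightarrow> s \<approx> u) t t'"
  by (cases z) (auto intro: tau_path_if_steps tau_path_sbisimilar tau_path.intros
      elim: tau_path.induct)

lemma sbisimilar_answer:
  assumes "s \<approx> t" and "tr s a s'"
  shows "(a = tau \<and> (\<exists>t'. tau_path (\<lambda>u. x = Mb \<longrightarrow> s \<approx> u) t t' \<and> s' \<approx> t')) \<or>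
    (\<exists>t1 t2 t'. tau_path (\<lambda>u. x = Mb \<longrightarrow> s \<approx> u) t t1 \<and> tr t1 a t2 \<and>
        tau_path (\<lambda>u. y = Mb \<longrightarrow> s' \<approx> u) t2 t' \<and> s' \<approx> t')"
  using sbisimilarD[OF assms]
proof (elim disjE exE conjE)
  fix t' assume "a = tau" "steps t t'" "s \<approx> t'" "s' \<approx> t'"
  then show ?thesis using tau_path_gstep[of x s t t'] tau_path_sbisimilar[OF assms(1)]
    by (cases x) auto
qed (blast dest: tau_path_gstep)

end

section \<open>Plays and strategies\<close>

locale bisim_game = lts tr tau for tr :: "'s \<Rightarrow> 'a \<Rightarrow> 's \<Rightarrow> bool" and tau :: 'a +
  fixes E :: "tag set"
begin

abbreviation move :: "('s, 'a) conf \<Rightarrow> ('s, 'a) conf \<Rightarrow> bool" where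
  "move \<equiv> gmove tr tau E"

abbreviation wins :: "('s, 'a) conf \<Rightarrow> bool" where
  "wins \<equiv> dup_wins tr tau E"

abbreviation strategy :: "(('s, 'a) conf list \<Rightarrow> ('s, 'a) conf) \<Rightarrow> bool" where
  "strategy \<equiv> dup_strategy tr tau E"

definition wins_with :: "(('s, 'a) conf list \<Rightarrow> ('s, 'a) conf) \<Rightarrow> ('s, 'a) conf \<Rightarrow> bool" where
  "wins_with \<sigma> c \<longleftrightarrow>
     (\<forall>xs. finite_play tr tau E \<sigma> c xs \<longrightarrow> owner (last xs) = Spo) \<and>
     (\<forall>p. infinite_play tr tau E \<sigma> c p \<longrightarrow> infinite {i. rew (p i) = Tick})"

lemma dup_wins_iff: "wins c \<longleftrightarrow> (\<exists>\<sigma>. strategy \<sigma> \<and> wins_with \<sigma> c)"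
  unfolding dup_wins_def wins_with_def by blast

lemma move_owner: "move c d \<Longrightarrow> owner d \<noteq> owner c"
  by (erule gmove.cases) auto

lemma move_reward: "move (Conf p q c m r) d \<Longrightarrow> move (Conf p q c m r') d"
  by (erule gmove.cases) (auto intro: gmove.intros)

lemma strategyD:
  "strategy \<sigma> \<Longrightarrow> h \<noteq> [] \<Longrightarrow> owner (last h) = Dup \<Longrightarrow> move (last h) d \<Longrightarrow> move (last h) (\<sigma> h)"
  unfolding dup_strategy_def by blast

lemma strategy_shift: "strategy \<sigma> \<Longrightarrow> strategy (\<lambda>h. \<sigma> (pre @ h))"
  unfolding dup_strategy_def by (metis Nil_is_append_conv last_appendR)

definition some_move :: "('s, 'a) conf list \<Rightarrow> ('s, 'a) conf" where
  "some_move h = (SOME d. move (last h) d)"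

lemma some_move: "move (last h) d \<Longrightarrow> move (last h) (some_move h)"
  unfolding some_move_def by (rule someI)

lemma finite_play_cong:
  assumes "\<And>h. h \<noteq> [] \<Longrightarrow> hd h = c \<Longrightarrow> \<sigma> h = \<sigma>' h"
  shows "finite_play tr tau E \<sigma> c xs \<longleftrightarrow> finite_play tr tau E \<sigma>' c xs"
proof -
  have "\<sigma> (take (Suc i) xs) = \<sigma>' (take (Suc i) xs)" if "xs \<noteq> []" "hd xs = c" for i
    using assms that by simp
  then show ?thesis unfolding finite_play_def by auto
qed

lemma infinite_play_cong:
  assumes "\<And>h. h \<noteq> [] \<Longrightarrow> hd h = c \<Longrightarrow> \<sigma> h = \<sigma>' h"
  shows "infinite_play tr tau E \<sigma> c p \<longleftrightarrow> infinite_play tr tau E \<sigma>' c p"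
proof -
  have "\<sigma> (map p [0..<Suc i]) = \<sigma>' (map p [0..<Suc i])" if "p 0 = c" for i
    using assms that by (simp add: map_upt_Suc del: upt_Suc)
  then show ?thesis unfolding infinite_play_def by auto
qed

lemma wins_with_cong:
  "(\<And>h. h \<noteq> [] \<Longrightarrow> hd h = c \<Longrightarrow> \<sigma> h = \<sigma>' h) \<Longrightarrow> wins_with \<sigma> c \<longleftrightarrow> wins_with \<sigma>' c"
  unfolding wins_with_def by (simp add: finite_play_cong[of c \<sigma> \<sigma>'] infinite_play_cong[of c \<sigma> \<sigma>'])

lemma finite_play_Cons:
  "finite_play tr tau E \<sigma> c (c # c1 # ys) \<longleftrightarrow>
     move c c1 \<and> (owner c = Dup \<longrightarrow> c1 = \<sigma> [c]) \<and>
     finite_play tr tau E (\<lambda>h. \<sigma> (c # h)) c1 (c1 # ys)"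
  (is "?l \<longleftrightarrow> ?r")
proof
  assume ?l
  then show ?r unfolding finite_play_def by (fastforce simp: All_less_Suc2[symmetric])
next
  assume ?r
  then show ?l unfolding finite_play_def by (auto simp: less_Suc_eq_0_disj)
qed

lemma infinite_play_Suc:
  "infinite_play tr tau E \<sigma> c p \<longleftrightarrow>
     p 0 = c \<and> move c (p 1) \<and> (owner c = Dup \<longrightarrow> p 1 = \<sigma> [c]) \<and>
     infinite_play tr tau E (\<lambda>h. \<sigma> (c # h)) (p 1) (\<lambda>i. p (Suc i))"
  (is "?l \<longleftrightarrow> ?r")
proof
  assume ?l
  then show ?r unfolding infinite_play_def
    by (auto simp: map_upt_Suc simp del: upt_Suc)
next
  assume r: ?r
  have "move (p i) (p (Suc i)) \<and> (owner (p i) = Dup \<longrightarrow> p (Suc i) = \<sigma> (map p [0..<Suc i]))" for i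
    using r unfolding infinite_play_def
    by (cases i) (simp_all add: map_upt_Suc del: upt_Suc)
  with r show ?l unfolding infinite_play_def by simp
qed

lemma infinite_Tick_Suc:
  "infinite {i. rew (p (Suc i)) = Tick} \<longleftrightarrow> infinite {i. rew (p i) = Tick}"
  using finite_vimage_Suc_iff[of "{i. rew (p i) = Tick}"] by (simp add: vimage_def)

lemma wins_with_move:
  assumes "wins_with \<sigma> c" and "move c c1" and "owner c = Dup \<Longrightarrow> c1 = \<sigma> [c]"
  shows "wins_with (\<lambda>h. \<sigma> (c # h)) c1"
  unfolding wins_with_def
proof (intro conjI allI impI)
  fix xs assume "finite_play tr tau E (\<lambda>h. \<sigma> (c # h)) c1 xs"
  moreover from this obtain ys where "xs = c1 # ys"
    unfolding finite_play_def by (cases xs) auto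
  ultimately have "finite_play tr tau E \<sigma> c (c # xs)"
    using assms(2,3) finite_play_Cons by blast
  then show "owner (last xs) = Spo"
    using assms(1) \<open>xs = c1 # ys\<close> unfolding wins_with_def by fastforce
next
  fix p assume play: "infinite_play tr tau E (\<lambda>h. \<sigma> (c # h)) c1 p"
  then have "p 0 = c1" unfolding infinite_play_def by simp
  with play have "infinite_play tr tau E \<sigma> c (case_nat c p)"
    using assms(2,3) infinite_play_Suc[of \<sigma> c "case_nat c p"] by simp
  then have "infinite {i. rew (case_nat c p (Suc i)) = Tick}"
    using assms(1) infinite_Tick_Suc unfolding wins_with_def by blast
  then show "infinite {i. rew (p i) = Tick}" by simp
qed

lemma wins_with_from_moves:
  assumes "\<And>c1. move c c1 \<Longrightarrow> (owner c = Dup \<Longrightarrow> c1 = \<sigma> [c]) \<Longrightarrow> wins_with (\<lambda>h. \<sigma> (c # h)) c1"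
    and "owner c = Dup \<Longrightarrow> move c (\<sigma> [c])"
  shows "wins_with \<sigma> c"
  unfolding wins_with_def
proof (intro conjI allI impI)
  fix xs assume play: "finite_play tr tau E \<sigma> c xs"
  then obtain ys where xs: "xs = c # ys" unfolding finite_play_def by (cases xs) auto
  show "owner (last xs) = Spo"
  proof (cases ys)
    case Nil
    then show ?thesis using play assms(2) xs unfolding finite_play_def by (cases "owner c") auto
  next
    case (Cons c1 zs)
    with play xs have "move c c1" "owner c = Dup \<Longrightarrow> c1 = \<sigma> [c]"
        "finite_play tr tau E (\<lambda>h. \<sigma> (c # h)) c1 ys"
      using finite_play_Cons by blast+
    then show ?thesis using assms(1) xs Cons unfolding wins_with_def by fastforce
  qed
next
  fix p assume "infinite_play tr tau E \<sigma> c p"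
  then have "move c (p 1)" "owner c = Dup \<Longrightarrow> p 1 = \<sigma> [c]"
      "infinite_play tr tau E (\<lambda>h. \<sigma> (c # h)) (p 1) (\<lambda>i. p (Suc i))"
    using infinite_play_Suc by blast+
  then show "infinite {i. rew (p i) = Tick}"
    using assms(1) infinite_Tick_Suc unfolding wins_with_def by blast
qed

lemma dup_wins_Spo_move:
  assumes "wins c" and "owner c = Spo" and "move c c1"
  shows "wins c1"
proof -
  obtain \<sigma> where "strategy \<sigma>" "wins_with \<sigma> c" using assms(1) dup_wins_iff by blast
  then show ?thesis
    using assms(2,3) wins_with_move strategy_shift[of \<sigma> "[c]"] dup_wins_iff by fastforce
qed

lemma wins_with_Dup_has_move:
  assumes "wins_with \<sigma> c" and "owner c = Dup"
  shows "\<exists>c1. move c c1"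
proof (rule ccontr)
  assume "\<nexists>c1. move c c1"
  then have "finite_play tr tau E \<sigma> c [c]" unfolding finite_play_def by auto
  then show False using assms unfolding wins_with_def by auto
qed

lemma dup_wins_Dup_move:
  assumes "wins c" and "owner c = Dup"
  shows "\<exists>c1. move c c1 \<and> wins c1"
proof -
  obtain \<sigma> where \<sigma>: "strategy \<sigma>" "wins_with \<sigma> c" using assms(1) dup_wins_iff by blast
  then have "move c (\<sigma> [c])"
    using wins_with_Dup_has_move[OF \<sigma>(2) assms(2)] strategyD[of \<sigma> "[c]"] assms(2) by auto
  moreover from this have "wins (\<sigma> [c])"
    using \<sigma> wins_with_move strategy_shift[of \<sigma> "[c]"] dup_wins_iff by fastforce
  ultimately show ?thesis by blast
qed

definition residual ::
    "(('s, 'a) conf list \<Rightarrow> ('s, 'a) conf) \<Rightarrow> ('s, 'a) conf list \<Rightarrow> ('s, 'a) conf list \<Rightarrow> ('s, 'a) conf"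
  where "residual \<sigma> h h' = \<sigma> (butlast h @ h')"

lemma residual_singleton: "residual \<sigma> [c] = \<sigma>"
  by (simp add: residual_def fun_eq_iff)

lemma strategy_residual: "strategy \<sigma> \<Longrightarrow> strategy (residual \<sigma> h)"
  using strategy_shift[of \<sigma> "butlast h"] by (simp add: residual_def[abs_def])

lemma move_Dup_residual:
  assumes "strategy \<sigma>" and "wins_with (residual \<sigma> h) (last h)" and "h \<noteq> []"
    and "owner (last h) = Dup"
  shows "move (last h) (\<sigma> h)"
  using wins_with_Dup_has_move[OF assms(2,4)] strategyD[OF assms(1,3,4)] by blast

lemma wins_with_residual_snoc:
  assumes "wins_with (residual \<sigma> h) (last h)" and "h \<noteq> []" and "move (last h) d"
    and "owner (last h) = Dup \<Longrightarrow> d = \<sigma> h"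
  shows "wins_with (residual \<sigma> (h @ [d])) d"
proof -
  have "residual \<sigma> (h @ [d]) = (\<lambda>h'. residual \<sigma> h (last h # h'))"
    using assms(2)
    by (cases h rule: rev_cases) (simp_all add: residual_def butlast_append fun_eq_iff)
  moreover have "residual \<sigma> h [last h] = \<sigma> h"
    using assms(2) by (simp add: residual_def)
  ultimately show ?thesis using wins_with_move[OF assms(1,3)] assms(4) by simp
qed

text \<open>The strategy plays d first and then continues with a winning strategy of the
  successor reached.\<close>

lemma dup_wins_from_moves:
  assumes "\<And>c1. move c c1 \<Longrightarrow> (owner c = Dup \<Longrightarrow> c1 = d) \<Longrightarrow> wins c1"
    and "owner c = Dup \<Longrightarrow> move c d"
  shows "wins c"
proof -
  obtain S where S: "\<And>c1. wins c1 \<Longrightarrow> strategy (S c1) \<and> wins_with (S c1) c1"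
    using dup_wins_iff by metis
  define \<sigma> where "\<sigma> h = (if h = [c] then d else case h of
      _ # c1 # rest \<Rightarrow> if wins c1 then S c1 (c1 # rest) else some_move h
    | _ \<Rightarrow> some_move h)" for h
  have "strategy \<sigma>"
    unfolding dup_strategy_def
  proof (intro allI impI)
    fix h assume h: "h \<noteq> [] \<and> owner (last h) = Dup \<and> (\<exists>c1. move (last h) c1)"
    show "move (last h) (\<sigma> h)"
    proof (cases h rule: remdups_adj.cases)
      case (2 c0)
      then show ?thesis using h assms(2) some_move[of "[c0]"] by (auto simp: \<sigma>_def)
    next
      case (3 c0 c1 rest)
      then show ?thesis using h S[of c1] strategyD[of "S c1" "c1 # rest"] some_move[of h]
        by (auto simp: \<sigma>_def)
    qed (use h in simp)
  qed
  moreover have "wins_with \<sigma> c"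
  proof (rule wins_with_from_moves)
    fix c1 assume c1: "move c c1" "owner c = Dup \<Longrightarrow> c1 = \<sigma> [c]"
    then have "wins c1" using assms(1) by (simp add: \<sigma>_def)
    have "\<sigma> (c # h) = S c1 h" if "h \<noteq> []" "hd h = c1" for h
      using that \<open>wins c1\<close> by (cases h) (auto simp: \<sigma>_def)
    then have "wins_with (\<lambda>h. \<sigma> (c # h)) c1 \<longleftrightarrow> wins_with (S c1) c1"
      by (rule wins_with_cong)
    then show "wins_with (\<lambda>h. \<sigma> (c # h)) c1" using S \<open>wins c1\<close> by blast
  next
    show "owner c = Dup \<Longrightarrow> move c (\<sigma> [c])" using assms(2) by (simp add: \<sigma>_def)
  qed
  ultimately show ?thesis unfolding dup_wins_iff by blast
qed

lemma dup_wins_SpoI: "owner c = Spo \<Longrightarrow> (\<And>c1. move c c1 \<Longrightarrow> wins c1) \<Longrightarrow> wins c"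
  by (rule dup_wins_from_moves[of c undefined]) auto

lemma dup_wins_DupI: "owner c = Dup \<Longrightarrow> move c c1 \<Longrightarrow> wins c1 \<Longrightarrow> wins c"
  by (rule dup_wins_from_moves[of c c1]) auto

lemma dup_wins_reward:
  assumes "wins (Conf p q c m r)"
  shows "wins (Conf p q c m r')"
proof (cases p)
  case Spo
  show ?thesis
    by (rule dup_wins_SpoI) (use Spo assms dup_wins_Spo_move move_reward in auto)
next
  case Dup
  then show ?thesis using assms dup_wins_Dup_move[of "Conf p q c m r"] move_reward
    by (metis dup_wins_DupI owner.simps)
qed

lemma infinite_play_exists:
  assumes "I [c0]"
    and "\<And>h. I h \<Longrightarrow> owner (last h) = Dup \<Longrightarrow> move (last h) (\<sigma> h) \<and> I (h @ [\<sigma> h])"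
    and "\<And>h. I h \<Longrightarrow> owner (last h) = Spo \<Longrightarrow> move (last h) (sp h) \<and> I (h @ [sp h])"
  shows "\<exists>p. infinite_play tr tau E \<sigma> c0 p \<and> (\<forall>n. I (map p [0..<Suc n]))"
proof -
  define next_conf where "next_conf h = (if owner (last h) = Dup then \<sigma> h else sp h)" for h
  define hist where "hist = rec_nat [c0] (\<lambda>_ h. h @ [next_conf h])"
  define p where "p n = last (hist n)" for n
  have hist_Suc: "hist (Suc n) = hist n @ [p (Suc n)]" for n
    by (simp add: hist_def p_def)
  have hist_eq: "hist n = map p [0..<Suc n]" for n
    by (induction n) (simp_all add: hist_Suc, simp add: hist_def p_def)
  have step: "move (p n) (p (Suc n)) \<and> (owner (p n) = Dup \<longrightarrow> p (Suc n) = \<sigma> (hist n)) \<and>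
      I (hist (Suc n))" if "I (hist n)" for n
    using that assms(2,3)[of "hist n"]
    by (cases "owner (p n)") (auto simp: hist_def p_def next_conf_def)
  have I_hist: "I (hist n)" for n
    by (induction n) (use assms(1) step in \<open>auto simp: hist_def\<close>)
  have "move (p n) (p (Suc n)) \<and> (owner (p n) = Dup \<longrightarrow> p (Suc n) = \<sigma> (map p [0..<Suc n]))" for n
    using step[OF I_hist, of n] unfolding hist_eq by blast
  moreover have "p 0 = c0" by (simp add: p_def hist_def)
  ultimately have "infinite_play tr tau E \<sigma> c0 p"
    unfolding infinite_play_def by blast
  then show ?thesis using I_hist hist_eq by auto
qed

lemma infinite_Tick_if_Star_decreasing:
  fixes \<mu> :: "('s, 'a) conf \<Rightarrow> nat"
  assumes "\<And>i. rew (p i) = Star \<Longrightarrow> rew (p (Suc i)) = Star \<Longrightarrow> \<mu> (p (Suc i)) < \<mu> (p i)"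
  shows "infinite {i. rew (p i) = Tick}"
proof
  assume "finite {i. rew (p i) = Tick}"
  then obtain N where "\<forall>i. rew (p i) = Tick \<longrightarrow> i < N" using finite_nat_set_iff_bounded by auto
  then have star: "i \<ge> N \<Longrightarrow> rew (p i) = Star" for i by (cases "rew (p i)") auto
  have "\<mu> (p (N + k)) + k \<le> \<mu> (p N)" for k
  proof (induction k)
    case (Suc k)
    have "\<mu> (p (Suc (N + k))) < \<mu> (p (N + k))" using assms star by simp
    then show ?case using Suc by simp
  qed simp
  from this[of "Suc (\<mu> (p N))"] show False by simp
qed

lemma dup_wins_by_ranking:
  fixes Inv :: "('s, 'a) conf set" and \<mu> :: "('s, 'a) conf \<Rightarrow> nat"
  defines "ok c c1 \<equiv> move c c1 \<and> c1 \<in> Inv \<and> (rew c = Star \<and> rew c1 = Star \<longrightarrow> \<mu> c1 < \<mu> c)"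
  assumes Spo: "\<And>c c1. c \<in> Inv \<Longrightarrow> owner c = Spo \<Longrightarrow> move c c1 \<Longrightarrow> ok c c1"
    and Dup: "\<And>c. c \<in> Inv \<Longrightarrow> owner c = Dup \<Longrightarrow> \<exists>c1. ok c c1"
    and "c0 \<in> Inv"
  shows "wins c0"
proof -
  obtain choice where choice: "\<And>c. c \<in> Inv \<Longrightarrow> owner c = Dup \<Longrightarrow> ok c (choice c)"
    using Dup by metis
  define \<sigma> where
    "\<sigma> h = (if last h \<in> Inv \<and> owner (last h) = Dup then choice (last h) else some_move h)"
    for h
  have "strategy \<sigma>"
    unfolding dup_strategy_def \<sigma>_def using choice some_move ok_def by auto
  have ok_step: "ok c c1"
    if "c \<in> Inv" "move c c1" "owner c = Dup \<longrightarrow> c1 = \<sigma> h" "last h = c" for c c1 h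
    using that Spo choice by (cases "owner c") (auto simp: \<sigma>_def)
  have "wins_with \<sigma> c0"
    unfolding wins_with_def
  proof (intro conjI allI impI)
    fix xs assume play: "finite_play tr tau E \<sigma> c0 xs"
    have "xs ! i \<in> Inv" if "i < length xs" for i
      using that
    proof (induction i)
      case 0 then show ?case using play \<open>c0 \<in> Inv\<close> unfolding finite_play_def by (cases xs) auto
    next
      case (Suc i)
      then show ?case using play ok_step[of "xs ! i" "xs ! Suc i" "take (Suc i) xs"]
        unfolding finite_play_def ok_def by (simp add: take_Suc_conv_app_nth)
    qed
    then have "last xs \<in> Inv" using play unfolding finite_play_def by (simp add: last_conv_nth)
    then show "owner (last xs) = Spo"
      using Dup[of "last xs"] play unfolding finite_play_def ok_def
      by (cases "owner (last xs)") auto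
  next
    fix p assume play: "infinite_play tr tau E \<sigma> c0 p"
    have ok: "ok (p i) (p (Suc i))" if "p i \<in> Inv" for i
      using play that ok_step[of "p i" "p (Suc i)" "map p [0..<i] @ [p i]"]
      unfolding infinite_play_def by simp
    have inv: "p i \<in> Inv" for i
      by (induction i) (use play \<open>c0 \<in> Inv\<close> ok in \<open>auto simp: infinite_play_def ok_def\<close>)
    show "infinite {i. rew (p i) = Tick}"
      by (rule infinite_Tick_if_Star_decreasing[where \<mu> = \<mu>]) (use ok inv in \<open>simp add: ok_def\<close>)
  qed
  with \<open>strategy \<sigma>\<close> show ?thesis using dup_wins_iff by blast
qed

end

fun challenge :: "('s, 'a) conf \<Rightarrow> ('a \<times> 's) option" where
  "challenge (Conf _ _ c _ _) = c"

fun repeat_challenge :: "('s, 'a) conf \<Rightarrow> ('s, 'a) conf" where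
  "repeat_challenge (Conf _ q c m _) = Conf Dup q c m Star"

context bisim_game
begin

lemma move_repeat_challenge:
  "owner c = Spo \<Longrightarrow> challenge c \<noteq> None \<Longrightarrow> move c (repeat_challenge c)"
  by (cases c) (auto intro: gmove.S1)

lemma move_Dup_challenge_Star:
  "owner c = Dup \<Longrightarrow> move c d \<Longrightarrow> challenge d \<noteq> None \<Longrightarrow> rew d = Star"
  by (erule gmove.cases) auto

text \<open>Duplicator settles the challenge of D if, however often Spoiler repeats it by (S1),
  she reaches a configuration without challenge after finitely many winning moves.\<close>

inductive settles :: "('s, 'a) conf \<Rightarrow> bool" where
  settled: "move D D' \<Longrightarrow> wins D' \<Longrightarrow> challenge D' = None \<Longrightarrow> settles D"
| settle_step: "move D D' \<Longrightarrow> wins D' \<Longrightarrow> challenge D' \<noteq> None \<Longrightarrow> settles (repeat_challenge D')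
    \<Longrightarrow> settles D"

text \<open>Otherwise Spoiler repeats the challenge forever; all configurations after the first then
  carry reward *, so Duplicator loses.\<close>

lemma dup_wins_settles:
  assumes "wins D" and "owner D = Dup" and "challenge D \<noteq> None"
  shows "settles D"
proof (rule ccontr)
  assume "\<not> settles D"
  obtain \<sigma> where \<sigma>: "strategy \<sigma>" "wins_with \<sigma> D" using assms(1) dup_wins_iff by blast
  define I where "I h \<longleftrightarrow> h \<noteq> [] \<and> wins_with (residual \<sigma> h) (last h) \<and> challenge (last h) \<noteq> None \<and>
      \<not> settles (if owner (last h) = Dup then last h else repeat_challenge (last h)) \<and>
      (1 < length h \<longrightarrow> rew (last h) = Star)" for h
  have "\<exists>p. infinite_play tr tau E \<sigma> D p \<and> (\<forall>n. I (map p [0..<Suc n]))"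
  proof (rule infinite_play_exists[where sp = "\<lambda>h. repeat_challenge (last h)"])
    show "I [D]" using assms(2,3) \<sigma>(2) \<open>\<not> settles D\<close> by (simp add: I_def residual_singleton)
  next
    fix h assume h: "I h" "owner (last h) = Dup"
    then have "h \<noteq> []" and won: "wins_with (residual \<sigma> h) (last h)" and "\<not> settles (last h)"
      by (simp_all add: I_def)
    then have mv: "move (last h) (\<sigma> h)" using move_Dup_residual \<sigma>(1) h(2) by blast
    have won': "wins_with (residual \<sigma> (h @ [\<sigma> h])) (\<sigma> h)"
      using wins_with_residual_snoc[OF won \<open>h \<noteq> []\<close> mv] by simp
    then have "wins (\<sigma> h)" using strategy_residual[OF \<sigma>(1)] dup_wins_iff by blast
    then have "challenge (\<sigma> h) \<noteq> None" "\<not> settles (repeat_challenge (\<sigma> h))"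
      using mv \<open>\<not> settles (last h)\<close> settles.intros by blast+
    moreover have "owner (\<sigma> h) = Spo" using move_owner[OF mv] h(2) by (cases "owner (\<sigma> h)") auto
    moreover have "rew (\<sigma> h) = Star"
      using move_Dup_challenge_Star[OF h(2) mv] \<open>challenge (\<sigma> h) \<noteq> None\<close> .
    ultimately show "move (last h) (\<sigma> h) \<and> I (h @ [\<sigma> h])" using mv won' by (simp add: I_def)
  next
    fix h assume h: "I h" "owner (last h) = Spo"
    let ?d = "repeat_challenge (last h)"
    have "h \<noteq> []" "challenge (last h) \<noteq> None" and won: "wins_with (residual \<sigma> h) (last h)"
      using h(1) by (simp_all add: I_def)
    then have mv: "move (last h) ?d" using move_repeat_challenge h(2) by blast
    have "wins_with (residual \<sigma> (h @ [?d])) ?d"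
      using wins_with_residual_snoc[OF won \<open>h \<noteq> []\<close> mv] h(2) by simp
    then show "move (last h) ?d \<and> I (h @ [?d])"
      using mv h by (cases "last h") (simp add: I_def)
  qed
  then obtain p where "infinite_play tr tau E \<sigma> D p" and I: "\<And>n. I (map p [0..<Suc n])" by blast
  then have "infinite {i. rew (p i) = Tick}" using \<sigma>(2) unfolding wins_with_def by blast
  moreover have "rew (p n) = Star" if "0 < n" for n
    using I[of n] that by (simp add: I_def)
  then have "{i. rew (p i) = Tick} \<subseteq> {0}" by fastforce
  ultimately show False using finite_subset by blast
qed

end

section \<open>Won positions form a generic bisimulation\<close>

lemma Frown_in_Eset_iff: "Frown \<in> Eset x y \<longleftrightarrow> x = Mo"
  by (simp add: Eset_def)

lemma Smile_in_Eset_iff: "Smile \<in> Eset x y \<longleftrightarrow> y = Mo"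
  by (simp add: Eset_def)

context bisim_game
begin

abbreviation won :: "'s \<Rightarrow> 's \<Rightarrow> bool" where
  "won \<equiv> game_equiv tr tau E"

lemma won_iff: "won s t \<longleftrightarrow> wins (Conf Spo (s, t) None None r)"
  unfolding game_equiv_def using dup_wins_reward by blast

lemma move_Spo_cases:
  assumes "move (Conf Spo (p1, p2) c m r) d"
  shows "(c \<noteq> None \<and> d = Conf Dup (p1, p2) c m Star) \<or>
    (\<exists>b w r'. tr p1 b w \<and> d = Conf Dup (p1, p2) (Some (b, w)) (Some (p2, Frown)) r') \<or>
    (\<exists>b w. tr p2 b w \<and> d = Conf Dup (p2, p1) (Some (b, w)) (Some (p1, Frown)) Tick)"
  using assms by (cases rule: gmove.cases) auto

lemma move_Spo_Some_cases:
  assumes "move (Conf Spo (p1, p2) (Some ch) m r) d"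
  shows "d = Conf Dup (p1, p2) (Some ch) m Star \<or>
    (\<exists>b w. tr p1 b w \<and> d = Conf Dup (p1, p2) (Some (b, w)) (Some (p2, Frown)) Tick) \<or>
    (\<exists>b w. tr p2 b w \<and> d = Conf Dup (p2, p1) (Some (b, w)) (Some (p1, Frown)) Tick)"
  using assms by (cases rule: gmove.cases) auto

lemma move_Dup_cases:
  assumes "move (Conf Dup (u, v) (Some (a, u')) (Some (w, f)) r) d"
  shows "(a = tau \<and> d = Conf Spo (u', w) None None Tick) \<or>
    (\<exists>v'. f = Frown \<and> tr w a v' \<and>
       (d = Conf Spo (u', v') (Some (a, u')) (Some (v', Smile)) Star \<or>
        d = Conf Spo (u', v') None None Tick \<or>
        (Smile \<in> E \<and> d = Conf Spo (u, v) (Some (a, u')) (Some (v', Smile)) Star))) \<or>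
    (\<exists>v'. tr w tau v' \<and>
       (d = Conf Spo (u, v') (Some (a, u')) (Some (v', f)) Star \<or>
        (f = Smile \<and> d = Conf Spo (u', v') None None Tick) \<or>
        (f \<in> E \<and> d = Conf Spo (u, v) (Some (a, u')) (Some (v', f)) Star)))"
  using assms by (cases rule: gmove.cases) auto

lemma won_challenge:
  assumes "won p1 p2" and "tr p1 a p1'"
  shows "wins (Conf Spo (p1, p2) (Some (a, p1')) (Some (p2, Frown)) r)"
proof (rule dup_wins_SpoI)
  fix d assume "move (Conf Spo (p1, p2) (Some (a, p1')) (Some (p2, Frown)) r) d"
  then have "move (Conf Spo (p1, p2) None None Star) d"
    using assms(2) by (cases rule: gmove.cases) (auto intro: gmove.intros)
  then show "wins d" using assms(1) dup_wins_Spo_move by (simp add: game_equiv_def)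
qed simp

lemma won_sym:
  assumes "won s t"
  shows "won t s"
  unfolding game_equiv_def
proof (rule dup_wins_SpoI)
  have won: "wins (Conf Spo (s, t) None None Star)" using assms by (simp add: game_equiv_def)
  fix d assume "move (Conf Spo (t, s) None None Star) d"
  from move_Spo_cases[OF this] show "wins d"
  proof (elim disjE exE conjE)
    fix b w r' assume "tr t b w" "d = Conf Dup (t, s) (Some (b, w)) (Some (s, Frown)) r'"
    moreover from this have "wins (Conf Dup (t, s) (Some (b, w)) (Some (s, Frown)) Tick)"
      using dup_wins_Spo_move[OF won _ gmove.S3] by simp
    ultimately show ?thesis using dup_wins_reward by blast
  next
    fix b w assume "tr s b w" "d = Conf Dup (s, t) (Some (b, w)) (Some (t, Frown)) Tick"
    then show ?thesis using dup_wins_Spo_move[OF won _ gmove.S2b] by simp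
  qed simp
qed simp

text \<open>Spoiler's moves from a configuration with a challenge ignore the partial match, except
  for repeating the challenge.\<close>

lemma dup_wins_Spo_change_match:
  assumes "wins (Conf Spo (p1, p2) (Some ch) m r)" and "wins (Conf Dup (p1, p2) (Some ch) m' Star)"
  shows "wins (Conf Spo (p1, p2) (Some ch) m' r')"
proof (rule dup_wins_SpoI)
  fix d assume "move (Conf Spo (p1, p2) (Some ch) m' r') d"
  then have "d = Conf Dup (p1, p2) (Some ch) m' Star \<or> move (Conf Spo (p1, p2) (Some ch) m r) d"
    by (cases rule: gmove.cases) (auto intro: gmove.intros)
  then show "wins d" using assms dup_wins_Spo_move by auto
qed simp

lemma won_if_challenge_won:
  assumes won: "wins (Conf Spo (p1, p2) (Some (a, p1')) m r)"
    and repeat: "tr p1 a p1' \<Longrightarrow> wins (Conf Dup (p1, p2) (Some (a, p1')) (Some (p2, Frown)) Star)"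
  shows "won p1 p2"
  unfolding game_equiv_def
proof (rule dup_wins_SpoI)
  fix d assume "move (Conf Spo (p1, p2) None None Star) d"
  from move_Spo_cases[OF this] show "wins d"
  proof (elim disjE exE conjE)
    fix b w r' assume b: "tr p1 b w" "d = Conf Dup (p1, p2) (Some (b, w)) (Some (p2, Frown)) r'"
    show ?thesis
    proof (cases "(b, w) = (a, p1')")
      case True
      then show ?thesis using repeat b dup_wins_reward by auto
    next
      case False
      then have "move (Conf Spo (p1, p2) (Some (a, p1')) m r)
          (Conf Dup (p1, p2) (Some (b, w)) (Some (p2, Frown)) Tick)"
        using b(1) by (auto intro: gmove.S2b)
      then have "wins (Conf Dup (p1, p2) (Some (b, w)) (Some (p2, Frown)) Tick)"
        using dup_wins_Spo_move[OF won] by simp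
      then show ?thesis using b(2) dup_wins_reward by blast
    qed
  next
    fix b w assume "tr p2 b w" "d = Conf Dup (p2, p1) (Some (b, w)) (Some (p1, Frown)) Tick"
    then show ?thesis using dup_wins_Spo_move[OF won _ gmove.S3] by simp
  qed simp
qed simp

lemma won_if_challenged:
  assumes "wins (Conf Spo (p1, p2) (Some ch) (Some (p2, Frown)) r)"
  shows "won p1 p2"
proof -
  obtain a p1' where ch: "ch = (a, p1')" by fastforce
  have "move (Conf Spo (p1, p2) (Some ch) (Some (p2, Frown)) r)
      (Conf Dup (p1, p2) (Some ch) (Some (p2, Frown)) Star)" by (rule gmove.S1) simp
  then show ?thesis
    using won_if_challenge_won assms dup_wins_Spo_move[OF assms] unfolding ch by simp
qed

lemma settles_Smile_loop_imp_Frown: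
  assumes "settles (Conf Dup (s', v) (Some (a, s')) (Some (v, Smile)) r)"
    and "Smile \<notin> E" and "tr s' a s'"
  shows "wins (Conf Dup (s', v) (Some (a, s')) (Some (v, Frown)) r)"
  using assms(1)
proof (induction "Conf Dup (s', v) (Some (a, s')) (Some (v, Smile)) r" arbitrary: v r
    rule: settles.induct)
  case (settled D')
  from move_Dup_cases[OF settled.hyps(1)] show ?case
  proof (elim disjE exE conjE)
    assume "a = tau" "D' = Conf Spo (s', v) None None Tick"
    then show ?thesis using settled.hyps(2) by (auto intro: dup_wins_DupI gmove.D1)
  next
    fix v' assume a: "tr v tau v'" "D' = Conf Spo (s', v') None None Tick"
    then have "wins (Conf Spo (s', v') (Some (a, s')) (Some (v', Frown)) Star)"
      using settled.hyps(2) won_challenge assms(3) won_iff by blast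
    then show ?thesis using a(1) by (auto intro: dup_wins_DupI gmove.D3a)
  qed (use settled.hyps(3) assms(2) in auto)
next
  case (settle_step D')
  from move_Dup_cases[OF settle_step.hyps(1)] show ?case
  proof (elim disjE exE conjE)
    fix v' assume a: "tr v tau v'" "D' = Conf Spo (s', v') (Some (a, s')) (Some (v', Smile)) Star"
    have "wins (Conf Dup (s', v') (Some (a, s')) (Some (v', Frown)) Star)"
      using settle_step.hyps(5) a(2) by simp
    then have "wins (Conf Spo (s', v') (Some (a, s')) (Some (v', Frown)) Star)"
      using dup_wins_Spo_change_match settle_step.hyps(2) a(2) by blast
    then show ?thesis using a(1) by (auto intro: dup_wins_DupI gmove.D3a)
  qed (use settle_step.hyps(3) assms(2) in auto)
qed

lemma won_if_Smile_won:
  assumes "Smile \<notin> E" and won: "wins (Conf Spo (s', v) (Some (a, s')) (Some (v, Smile)) r)"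
  shows "won s' v"
proof (rule won_if_challenge_won[OF won])
  assume "tr s' a s'"
  have "move (Conf Spo (s', v) (Some (a, s')) (Some (v, Smile)) r)
      (Conf Dup (s', v) (Some (a, s')) (Some (v, Smile)) Star)" by (simp add: gmove.S1)
  then have "wins (Conf Dup (s', v) (Some (a, s')) (Some (v, Smile)) Star)"
    using dup_wins_Spo_move[OF won] by simp
  then have "settles (Conf Dup (s', v) (Some (a, s')) (Some (v, Smile)) Star)"
    using dup_wins_settles by simp
  then show "wins (Conf Dup (s', v) (Some (a, s')) (Some (v, Frown)) Star)"
    using settles_Smile_loop_imp_Frown assms(1) \<open>tr s' a s'\<close> by blast
qed

lemma settles_Smile_reaches_won:
  assumes "settles (Conf Dup (p1, p2) (Some (a, s')) (Some (v, Smile)) r)"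
  shows "\<exists>t'. steps v t' \<and> won s' t'"
  using assms
proof (induction "Conf Dup (p1, p2) (Some (a, s')) (Some (v, Smile)) r" arbitrary: p1 p2 v r
    rule: settles.induct)
  case (settled D')
  from move_Dup_cases[OF settled.hyps(1)] show ?case
  proof (elim disjE exE conjE)
    assume "D' = Conf Spo (s', v) None None Tick"
    then have "won s' v" using settled.hyps(2) won_iff[of s' v Tick] by simp
    then show ?thesis using steps_refl by blast
  next
    fix v' assume "tr v tau v'" "D' = Conf Spo (s', v') None None Tick"
    then have "won s' v'" using settled.hyps(2) won_iff[of s' v' Tick] by simp
    then show ?thesis using steps_single[OF \<open>tr v tau v'\<close>] by blast
  qed (use settled.hyps(3) in auto)
next
  case (settle_step D')
  from move_Dup_cases[OF settle_step.hyps(1)] show ?case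
  proof (elim disjE exE conjE)
    fix v' assume "tr v tau v'" "D' = Conf Spo (p1, v') (Some (a, s')) (Some (v', Smile)) Star"
    then show ?thesis using settle_step.hyps(5)[of p1 v' v' Star] steps_Cons by fastforce
  next
    fix v' assume "tr v tau v'" "D' = Conf Spo (p1, p2) (Some (a, s')) (Some (v', Smile)) Star"
    then show ?thesis using settle_step.hyps(5)[of p1 p2 v' Star] steps_Cons by fastforce
  qed (use settle_step.hyps(3) in auto)
qed

end

locale gbisim_game = bisim_game tr tau E + gbisim_lts tr tau x y
  for tr :: "'s \<Rightarrow> 'a \<Rightarrow> 's \<Rightarrow> bool" and tau :: 'a and E :: "tag set" and x y :: mode
begin

text \<open>The clause of a generic bisimulation for the challenge s -a-> s', answered from v, except
  that in mode b only the end t1 of the first \<open>\<tau>\<close>-path is required to be related to s.\<close>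

definition matched :: "'s \<Rightarrow> 'a \<Rightarrow> 's \<Rightarrow> 's \<Rightarrow> bool" where
  "matched s a s' v \<longleftrightarrow> (a = tau \<and> won s' v) \<or>
     (\<exists>t1 t2 t'. steps v t1 \<and> (x = Mb \<longrightarrow> won s t1) \<and> tr t1 a t2 \<and>
        gstep tr tau y won s' t2 t' \<and> won s' t')"

lemma gstep_refl: "won s v \<Longrightarrow> gstep tr tau z won s v v"
  by (cases z) (simp_all add: steps_refl)

lemma matched_tau_Cons:
  assumes "tr v tau v'" and "x = Mb \<Longrightarrow> won s v" and "matched s a s' v'"
  shows "matched s a s' v"
proof -
  from assms(3) consider (tau) "a = tau" "won s' v'"
    | (visible) t1 t2 t' where "steps v' t1" "x = Mb \<longrightarrow> won s t1" "tr t1 a t2"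
        "gstep tr tau y won s' t2 t'" "won s' t'"
    unfolding matched_def by blast
  then show ?thesis
  proof cases
    case tau
    then show ?thesis using assms(1,2) steps_refl gstep_refl unfolding matched_def by blast
  next
    case visible
    then show ?thesis using steps_Cons[OF assms(1)] unfolding matched_def by blast
  qed
qed

lemma settles_Frown_matched:
  assumes "settles (Conf Dup (s, p2) (Some (a, s')) (Some (v, Frown)) r)" and E: "E \<subseteq> Eset x y"
    and "x = Mb \<Longrightarrow> won s v"
  shows "matched s a s' v"
  using assms(1,3)
proof (induction "Conf Dup (s, p2) (Some (a, s')) (Some (v, Frown)) r" arbitrary: p2 v r
    rule: settles.induct)
  case (settled D')
  from move_Dup_cases[OF settled.hyps(1)] show ?case
  proof (elim disjE exE conjE)
    assume "a = tau" "D' = Conf Spo (s', v) None None Tick"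
    then show ?thesis using settled.hyps(2) won_iff unfolding matched_def by blast
  next
    fix v' assume a: "tr v a v'" "D' = Conf Spo (s', v') None None Tick"
    then have "won s' v'" using settled.hyps(2) won_iff by blast
    then show ?thesis
      using a(1) settled.prems steps_refl gstep_refl unfolding matched_def by blast
  qed (use settled.hyps(3) in auto)
next
  case (settle_step D')
  from move_Dup_cases[OF settle_step.hyps(1)] show ?case
  proof (elim disjE exE conjE)
    fix v' assume a: "tr v a v'" "D' = Conf Spo (s', v') (Some (a, s')) (Some (v', Smile)) Star"
    then obtain t' where t': "steps v' t'" "won s' t'"
      using settle_step.hyps(4) settles_Smile_reaches_won by force
    have "y = Mb \<Longrightarrow> won s' v'"
      using won_if_Smile_won settle_step.hyps(2) a(2) E Smile_in_Eset_iff by blast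
    then have "gstep tr tau y won s' v' t'" using t' by (cases y) simp_all
    then show ?thesis
      using a(1) t'(2) settle_step.prems steps_refl unfolding matched_def by blast
  next
    fix v' assume a: "tr v a v'" "Smile \<in> E"
      "D' = Conf Spo (s, p2) (Some (a, s')) (Some (v', Smile)) Star"
    then obtain t' where t': "steps v' t'" "won s' t'"
      using settle_step.hyps(4) settles_Smile_reaches_won by force
    have "y = Mo" using a(2) E Smile_in_Eset_iff by blast
    then show ?thesis
      using a(1) t' settle_step.prems steps_refl unfolding matched_def by auto
  next
    fix v' assume a: "tr v tau v'" "D' = Conf Spo (s, v') (Some (a, s')) (Some (v', Frown)) Star"
    then have "won s v'" using settle_step.hyps(2) won_if_challenged by blast
    then have "matched s a s' v'" using settle_step.hyps(5) a(2) by simp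
    then show ?thesis using matched_tau_Cons[OF a(1)] settle_step.prems by blast
  next
    fix v' assume a: "tr v tau v'" "Frown \<in> E"
      "D' = Conf Spo (s, p2) (Some (a, s')) (Some (v', Frown)) Star"
    then have "x = Mo" using E Frown_in_Eset_iff by blast
    then have "matched s a s' v'" using settle_step.hyps(5) a(3) by simp
    then show ?thesis using matched_tau_Cons[OF a(1)] settle_step.prems by blast
  qed (use settle_step.hyps(3) in auto)
qed

lemma generic_bisim_won:
  assumes "E \<subseteq> Eset x y"
  shows "generic_bisim tr tau x y won"
  unfolding generic_bisim_def
proof (intro conjI allI impI)
  show "symp won" by (rule sympI) (rule won_sym)
  fix s t a s' assume st: "won s t \<and> tr s a s'"
  let ?D = "Conf Dup (s, t) (Some (a, s')) (Some (t, Frown)) Star"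
  have "move (Conf Spo (s, t) None None Star) ?D" using st by (simp add: gmove.S2a)
  moreover have "wins (Conf Spo (s, t) None None Star)" using st by (simp add: game_equiv_def)
  ultimately have "wins ?D" using dup_wins_Spo_move by simp
  then have "settles ?D" using dup_wins_settles by simp
  then have "matched s a s' t" using settles_Frown_matched[OF _ assms] st by blast
  then show "(a = tau \<and> won s' t) \<or>
      (\<exists>t' t1 t2. gstep tr tau x won s t t1 \<and> tr t1 a t2 \<and> gstep tr tau y won s' t2 t' \<and>
        won s' t')"
    unfolding matched_def
  proof (elim disjE exE conjE)
    fix t1 t2 t' assume "steps t t1" "x = Mb \<longrightarrow> won s t1" "tr t1 a t2"
      "gstep tr tau y won s' t2 t'" "won s' t'"
    then show ?thesis using st by (cases x) auto
  qed simp
qed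

end

section \<open>Semi-generic bisimilar positions are won\<close>

context gbisim_game
begin

text \<open>Duplicator can answer the challenge of the Duplicator configuration D within n moves
  when Spoiler only repeats it, passing through \<open>\<approx>\<close>-related positions.\<close>

inductive answers_in :: "('s, 'a) conf \<Rightarrow> nat \<Rightarrow> bool" where
  answered: "move D (Conf Spo (p1, p2) None None Tick) \<Longrightarrow> owner D = Dup \<Longrightarrow> p1 \<approx> p2 \<Longrightarrow>
    answers_in D 0"
| answer_step: "move D (Conf Spo (p1, p2) (Some ch) m r) \<Longrightarrow> owner D = Dup \<Longrightarrow> p1 \<approx> p2 \<Longrightarrow>
    answers_in (Conf Dup (p1, p2) (Some ch) m Star) n \<Longrightarrow> answers_in D (Suc n)"

lemma answers_in_Smile_tau_path:
  assumes "tau_path (\<lambda>u. y = Mb \<longrightarrow> s' \<approx> u) w t'" and "s' \<approx> t'" and "tr v tau w"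
    and "p1 \<approx> p2" and "y = Mb \<Longrightarrow> p1 = s' \<and> p2 = v" and E: "Eset x y \<subseteq> E"
  shows "\<exists>n. answers_in (Conf Dup (p1, p2) (Some (a, s')) (Some (v, Smile)) r) n"
  using assms(1-5)
proof (induction arbitrary: v p1 p2 r rule: tau_path.induct)
  case (tau_path_refl u)
  then have "move (Conf Dup (p1, p2) (Some (a, s')) (Some (v, Smile)) r)
      (Conf Spo (s', u) None None Tick)"
    by (simp add: gmove.D3b)
  then show ?case using tau_path_refl answered by fastforce
next
  case (tau_path_Cons u w' v')
  show ?case
  proof (cases y)
    case Mb
    then have "s' \<approx> u" "p1 = s'" "p2 = v" using tau_path_Cons by auto
    moreover obtain n where "answers_in (Conf Dup (s', u) (Some (a, s')) (Some (u, Smile)) Star) n"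
      using tau_path_Cons.IH[of u s' u Star] tau_path_Cons.hyps(2) tau_path_Cons.prems(1)
        \<open>s' \<approx> u\<close> Mb by blast
    moreover have "move (Conf Dup (p1, p2) (Some (a, s')) (Some (v, Smile)) r)
        (Conf Spo (s', u) (Some (a, s')) (Some (u, Smile)) Star)"
      using tau_path_Cons.prems(2) \<open>p1 = s'\<close> by (simp add: gmove.D3a)
    ultimately show ?thesis by (metis answer_step owner.simps)
  next
    case Mo
    obtain n where "answers_in (Conf Dup (p1, p2) (Some (a, s')) (Some (u, Smile)) Star) n"
      using tau_path_Cons.IH[of u p1 p2 Star] tau_path_Cons.hyps(2) tau_path_Cons.prems(1,3) Mo
      by blast
    moreover have "Smile \<in> E" using Mo E Smile_in_Eset_iff by blast
    then have "move (Conf Dup (p1, p2) (Some (a, s')) (Some (v, Smile)) r)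
        (Conf Spo (p1, p2) (Some (a, s')) (Some (u, Smile)) Star)"
      using tau_path_Cons.prems(2) by (simp add: gmove.D3c)
    ultimately show ?thesis using tau_path_Cons.prems(3) by (metis answer_step owner.simps)
  qed
qed

lemma answers_in_Frown_step:
  assumes "tr u a t2" and "tau_path (\<lambda>u. y = Mb \<longrightarrow> s' \<approx> u) t2 t'" and "s' \<approx> t'" and "s \<approx> p2"
    and E: "Eset x y \<subseteq> E"
  shows "\<exists>n. answers_in (Conf Dup (s, p2) (Some (a, s')) (Some (u, Frown)) r) n"
  using assms(2)
proof (cases rule: tau_path.cases)
  case tau_path_refl
  then have "move (Conf Dup (s, p2) (Some (a, s')) (Some (u, Frown)) r)
      (Conf Spo (s', t2) None None Tick)"
    using assms(1) by (simp add: gmove.D2b)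
  then show ?thesis using assms(3) tau_path_refl answered by fastforce
next
  case (tau_path_Cons w)
  show ?thesis
  proof (cases y)
    case Mb
    then have "s' \<approx> t2" using tau_path_Cons(1) by simp
    moreover obtain n
      where "answers_in (Conf Dup (s', t2) (Some (a, s')) (Some (t2, Smile)) Star) n"
      using answers_in_Smile_tau_path[OF tau_path_Cons(3) assms(3) tau_path_Cons(2) \<open>s' \<approx> t2\<close> _ E]
      by blast
    moreover have "move (Conf Dup (s, p2) (Some (a, s')) (Some (u, Frown)) r)
        (Conf Spo (s', t2) (Some (a, s')) (Some (t2, Smile)) Star)"
      using assms(1) by (simp add: gmove.D2a)
    ultimately show ?thesis by (metis answer_step owner.simps)
  next
    case Mo
    obtain n where "answers_in (Conf Dup (s, p2) (Some (a, s')) (Some (t2, Smile)) Star) n"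
      using answers_in_Smile_tau_path[OF tau_path_Cons(3) assms(3) tau_path_Cons(2) assms(4) _ E] Mo
      by blast
    moreover have "Smile \<in> E" using Mo E Smile_in_Eset_iff by blast
    then have "move (Conf Dup (s, p2) (Some (a, s')) (Some (u, Frown)) r)
        (Conf Spo (s, p2) (Some (a, s')) (Some (t2, Smile)) Star)"
      using assms(1) by (simp add: gmove.D2c)
    ultimately show ?thesis using assms(4) by (metis answer_step owner.simps)
  qed
qed

lemma answers_in_Frown_tau_path:
  assumes "tau_path (\<lambda>u. x = Mb \<longrightarrow> s \<approx> u) v t1"
    and "(a = tau \<and> s' \<approx> t1) \<or>
      (\<exists>t2 t'. tr t1 a t2 \<and> tau_path (\<lambda>u. y = Mb \<longrightarrow> s' \<approx> u) t2 t' \<and> s' \<approx> t')"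
    and "s \<approx> p2" and "x = Mb \<Longrightarrow> p2 = v" and E: "Eset x y \<subseteq> E"
  shows "\<exists>n. answers_in (Conf Dup (s, p2) (Some (a, s')) (Some (v, Frown)) r) n"
  using assms(1-4)
proof (induction arbitrary: p2 r rule: tau_path.induct)
  case (tau_path_refl u)
  from tau_path_refl.prems(1) show ?case
  proof (elim disjE exE conjE)
    assume "a = tau" "s' \<approx> u"
    then have "move (Conf Dup (s, p2) (Some (a, s')) (Some (u, Frown)) r)
        (Conf Spo (s', u) None None Tick)"
      by (simp add: gmove.D1)
    then show ?thesis using \<open>s' \<approx> u\<close> answered by fastforce
  qed (use answers_in_Frown_step tau_path_refl.prems(2) E in blast)
next
  case (tau_path_Cons u w t1)
  show ?case
  proof (cases x)
    case Mb
    then have "s \<approx> w" using tau_path_hd[OF tau_path_Cons.hyps(3)] by simp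
    moreover obtain n where "answers_in (Conf Dup (s, w) (Some (a, s')) (Some (w, Frown)) Star) n"
      using tau_path_Cons.IH[of w Star] tau_path_Cons.prems(1) \<open>s \<approx> w\<close> by blast
    moreover have "move (Conf Dup (s, p2) (Some (a, s')) (Some (u, Frown)) r)
        (Conf Spo (s, w) (Some (a, s')) (Some (w, Frown)) Star)"
      using tau_path_Cons.hyps(2) by (simp add: gmove.D3a)
    ultimately show ?thesis by (metis answer_step owner.simps)
  next
    case Mo
    obtain n where "answers_in (Conf Dup (s, p2) (Some (a, s')) (Some (w, Frown)) Star) n"
      using tau_path_Cons.IH[of p2 Star] tau_path_Cons.prems(1,2) Mo by blast
    moreover have "Frown \<in> E" using Mo E Frown_in_Eset_iff by blast
    then have "move (Conf Dup (s, p2) (Some (a, s')) (Some (u, Frown)) r)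
        (Conf Spo (s, p2) (Some (a, s')) (Some (w, Frown)) Star)"
      using tau_path_Cons.hyps(2) by (simp add: gmove.D3c)
    ultimately show ?thesis using tau_path_Cons.prems(2) by (metis answer_step owner.simps)
  qed
qed

lemma sbisimilar_answers_in:
  assumes "s \<approx> t" and "tr s a s'" and "Eset x y \<subseteq> E"
  shows "\<exists>n. answers_in (Conf Dup (s, t) (Some (a, s')) (Some (t, Frown)) r) n"
  using sbisimilar_answer[OF assms(1,2)]
proof (elim disjE exE conjE)
  fix t' assume "a = tau" "tau_path (\<lambda>u. x = Mb \<longrightarrow> s \<approx> u) t t'" "s' \<approx> t'"
  then show ?thesis using answers_in_Frown_tau_path assms(1,3) by blast
next
  fix t1 t2 t' assume "tau_path (\<lambda>u. x = Mb \<longrightarrow> s \<approx> u) t t1" "tr t1 a t2"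
    "tau_path (\<lambda>u. y = Mb \<longrightarrow> s' \<approx> u) t2 t'" "s' \<approx> t'"
  then show ?thesis using answers_in_Frown_tau_path assms(1,3) by blast
qed

lemma sbisimilar_won:
  assumes E: "Eset x y \<subseteq> E" and "s \<approx> t"
  shows "won s t"
proof -
  define rank where "rank c = (LEAST n. answers_in c n)" for c
  define Inv where "Inv = {c. (\<exists>p1 p2. c = Conf Spo (p1, p2) None None Tick \<and> p1 \<approx> p2) \<or>
      (owner c = Dup \<and> (\<exists>n. answers_in c n)) \<or>
      (\<exists>p1 p2 ch m r. c = Conf Spo (p1, p2) (Some ch) m r \<and> p1 \<approx> p2 \<and>
         (\<exists>n. answers_in (Conf Dup (p1, p2) (Some ch) m Star) n))}"
  define \<mu> where "\<mu> c = (if owner c = Dup then 2 * rank c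
      else if challenge c = None then 0 else 2 * rank (repeat_challenge c) + 1)" for c
  have challenge_Inv: "Conf Dup (p1, p2) (Some (b, w)) (Some (p2, Frown)) r \<in> Inv"
    if "p1 \<approx> p2" "tr p1 b w" for p1 p2 b w r
    using sbisimilar_answers_in[OF that E] by (simp add: Inv_def)
  have "wins (Conf Spo (s, t) None None Tick)"
  proof (rule dup_wins_by_ranking[where Inv = Inv and \<mu> = \<mu>])
    show "Conf Spo (s, t) None None Tick \<in> Inv" using assms(2) by (simp add: Inv_def)
  next
    fix c c1 assume c: "c \<in> Inv" "owner c = Spo" and "move c c1"
    consider (dagger) p1 p2 where "c = Conf Spo (p1, p2) None None Tick" "p1 \<approx> p2"
      | (challenged) p1 p2 ch m r n where "c = Conf Spo (p1, p2) (Some ch) m r" "p1 \<approx> p2"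
          "answers_in (Conf Dup (p1, p2) (Some ch) m Star) n"
      using c by (auto simp: Inv_def)
    then show "move c c1 \<and> c1 \<in> Inv \<and> (rew c = Star \<and> rew c1 = Star \<longrightarrow> \<mu> c1 < \<mu> c)"
    proof cases
      case dagger
      from move_Spo_cases[OF \<open>move c c1\<close>[unfolded dagger(1)]] have "c1 \<in> Inv"
        using challenge_Inv dagger(2) sbisimilar_sym by auto
      then show ?thesis using \<open>move c c1\<close> dagger(1) by simp
    next
      case challenged
      from move_Spo_Some_cases[OF \<open>move c c1\<close>[unfolded challenged(1)]] show ?thesis
        using \<open>move c c1\<close> challenge_Inv challenged sbisimilar_sym
        by (auto simp: Inv_def \<mu>_def)
    qed
  next
    fix c assume c: "c \<in> Inv" "owner c = Dup"
    then have "answers_in c (rank c)" unfolding rank_def Inv_def by (auto intro: LeastI)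
    then show "\<exists>c1. move c c1 \<and> c1 \<in> Inv \<and> (rew c = Star \<and> rew c1 = Star \<longrightarrow> \<mu> c1 < \<mu> c)"
    proof (cases rule: answers_in.cases)
      case (answered p1 p2)
      then show ?thesis by (auto simp: Inv_def)
    next
      case (answer_step p1 p2 ch m r n)
      have "rank (Conf Dup (p1, p2) (Some ch) m Star) \<le> n"
        unfolding rank_def using answer_step(5) by (rule Least_le)
      then show ?thesis using answer_step c(2) by (auto simp: Inv_def \<mu>_def)
    qed
  qed
  then show ?thesis using won_iff by blast
qed

end

theorem theorem5p2:
  fixes tr :: "'s \<Rightarrow> 'a \<Rightarrow> 's \<Rightarrow> bool" and tau :: 'a
    and x y :: mode and s t :: 's
  shows "gbisimilar tr tau x y s t \<longleftrightarrow> game_equiv tr tau (Eset x y) s t"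
proof
  assume "gbisimilar tr tau x y s t"
  then obtain R where "generic_bisim tr tau x y R" "R s t" unfolding gbisimilar_def by blast
  then have "lts.semi_gbisimilar tr tau x y s t"
    using lts.generic_bisim_imp_semi_gbisim gbisim_lts.sbisimilarI by metis
  then show "game_equiv tr tau (Eset x y) s t"
    by (rule gbisim_game.sbisimilar_won[OF subset_refl])
next
  assume "game_equiv tr tau (Eset x y) s t"
  moreover have "generic_bisim tr tau x y (game_equiv tr tau (Eset x y))"
    by (rule gbisim_game.generic_bisim_won) (rule subset_refl)
  ultimately show "gbisimilar tr tau x y s t" unfolding gbisimilar_def by blast
qed

end
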